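(* Let $G=(V,E)$ be an undirected weighted graph with vertex set $V$ of size $n$, where each edge $\{i,j\}$ carries a nonnegative weight $w_{ij}=w_{ji}$ (with $w_{ij}=0$ if there is no edge) and each vertex $i$ carries an attribute vector $x_i\in\mathbb{R}^d$. Define the normalized adjacency matrix $A$ by $$A_{ij}=\begin{cases}\dfrac{w_{ij}}{\sum_{i\le j} w_{ij}}, & i=j,\\[2mm] \dfrac{w_{ij}}{2\sum_{i\le j} w_{ij}}, & i\neq j,\end{cases}$$ and set $A_{i\cdot}=\sum_j A_{ij}$, $A_{\cdot j}=\sum_i A_{ij}$, and $d(x,y)=\|x-y\|$ (Euclidean norm). Let $(X,Y)$ be a pair of random vectors in $\mathbb{R}^d$ with joint distribution $$P(X=x,Y=y)=\sum_{\substack{i,j\in V\\ x_i=x,\ x_j=y}} A_{ij}.$$ Then the squared distance correlation of $X$ and $Y$, i.e. the squared vector assortativity $$r^2=\frac{\mathrm{dCov}^2(X,Y)}{\big(\mathrm{dCov}^2(X,X)\,\mathrm{dCov}^2(Y,Y)\big)^{1/2}},$$ equals $r^2=f_1/f_2$, where $$f_1=\sum_{i',j'}\sum_{i,j}A_{ij}A_{i'j'}\,d(x_i,x_{i'})\,d(x_j,x_{j'})-2\sum_{i,j}A_{ij}\Big(\sum_{i'}A_{i'\cdot}\,d(x_i,x_{i'})\Big)\Big(\sum_{j'}A_{\cdot j'}\,d(x_j,x_{j'})\Big)+\Big(\sum_{i,i'}A_{i\cdot}A_{i'\cdot}\,d(x_i,x_{i'})\Big)^2,$$ $$f_2=\s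um_{i,i'}A_{i\cdot}A_{i'\cdot}\,\big(d(x_i,x_{i'})\big)^2-2\sum_{i}A_{i\cdot}\Big(\sum_{i'}A_{i'\cdot}\,d(x_i,x_{i'})\Big)^2+\Big(\sum_{i,i'}A_{i\cdot}A_{i'\cdot}\,d(x_i,x_{i'})\Big)^2.$$
   Context: Distance covariance (in the form of Lyons): for random vectors $(X,Y)$ with marginal laws $\mu,\nu$ and finite first moments, let $(X',Y')$ be an independent copy of $(X,Y)$. Set $a_\mu(x)=E_{X'}\|x-X'\|$, $D(\mu)=E\|X-X'\|$, and $d_\mu(x,x')=\|x-x'\|-a_\mu(x)-a_\mu(x')+D(\mu)$, and similarly $a_\nu$, $D(\nu)$, $d_\nu$ for $Y$. Then $\mathrm{dCov}^2(X,Y)=E[d_\mu(X,X')\,d_\nu(Y,Y')]$, $\mathrm{dCov}^2(X,X)=E[d_\mu(X,X')^2]$, $\mathrm{dCov}^2(Y,Y)=E[d_\nu(Y,Y')^2]$. The distance correlation squared is $\mathrm{dCov}^2(X,Y)/(\mathrm{dCov}^2(X,X)\,\mathrm{dCov}^2(Y,Y))^{1/2}$ (defined when the denominator is positive). Note that the joint distribution of $(X,Y)$ is symmetric, so $X$ and $Y$ have the same marginal law, given by $P(X=x)=\sum_{i:\,x_i=x}A_{i\cdot}$. *)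

theory Defs
  imports "HOL-Probability.Probability"
begin

definition total_weight :: "nat \<Rightarrow> (nat \<Rightarrow> nat \<Rightarrow> real) \<Rightarrow> real" where
  "total_weight n w = (\<Sum>j<n. \<Sum>i\<in>{..j}. w i j)"

definition normA :: "nat \<Rightarrow> (nat \<Rightarrow> nat \<Rightarrow> real) \<Rightarrow> nat \<Rightarrow> nat \<Rightarrow> real" where
  "normA n w i j = (if i = j then w i j / total_weight n w
                    else w i j / (2 * total_weight n w))"

definition vertex_pair_pmf :: "nat \<Rightarrow> (nat \<Rightarrow> nat \<Rightarrow> real) \<Rightarrow> (nat \<times> nat) pmf" where
  "vertex_pair_pmf n w =
     embed_pmf (\<lambda>(i,j). if i < n \<and> j < n then normA n w i j else 0)"

definition attr_pmf :: "nat \<Rightarrow> (nat \<Rightarrow> nat \<Rightarrow> real) \<Rightarrow> (nat \<Rightarrow> 'a) \<Rightarrow> ('a \<times> 'a) pmf" where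
  "attr_pmf n w x = map_pmf (\<lambda>(i,j). (x i, x j)) (vertex_pair_pmf n w)"

text \<open>Squared distance covariance (Lyons' form) of a joint law M of (X,Y).\<close>
definition dcov2 :: "('a::real_normed_vector \<times> 'b::real_normed_vector) pmf \<Rightarrow> real" where
  "dcov2 M =
    (let \<mu> = map_pmf fst M; \<nu> = map_pmf snd M;
         a\<mu> = (\<lambda>x. measure_pmf.expectation \<mu> (\<lambda>x'. norm (x - x')));
         D\<mu> = measure_pmf.expectation \<mu> a\<mu>;
         d\<mu> = (\<lambda>x x'. norm (x - x') - a\<mu> x - a\<mu> x' + D\<mu>);
         a\<nu> = (\<lambda>y. measure_pmf.expectation \<nu> (\<lambda>y'. norm (y - y')));
         D\<nu> = measure_pmf.expectation \<nu> a\<nu>;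
         d\<nu> = (\<lambda>y y'. norm (y - y') - a\<nu> y - a\<nu> y' + D\<nu>)
     in measure_pmf.expectation (pair_pmf M M)
          (\<lambda>((x,y),(x',y')). d\<mu> x x' * d\<nu> y y'))"

definition dcor2 :: "('a::real_normed_vector \<times> 'b::real_normed_vector) pmf \<Rightarrow> real" where
  "dcor2 M = dcov2 M /
     sqrt (dcov2 (map_pmf (\<lambda>(x,y). (x,x)) M) * dcov2 (map_pmf (\<lambda>(x,y). (y,y)) M))"

end

theory Submission
  imports Defs
begin

text \<open>
  By symmetry of the weights the law of the vertex pair is invariant under swapping, so X and Y
  both have the law \<mu> of x_I, where vertex I has probability A_{i.}.  For a finitely supported
  law, the doubly centred distance d_\<mu>(z, z') has vanishing weighted row and column sums, so in
  E[d_\<mu>(X, X') d_\<nu>(Y, Y')] the additive corrections of d_\<nu> drop out and what remains is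
  E|X - X'| |Y - Y'| - 2 E[a_\<mu>(X) a_\<nu>(Y)] + D(\<mu>) D(\<nu>).  Written as sums over vertex pairs
  this is f1, and for the law of (X, X) it is f2.  Since dCov2(X, X) = E[d_\<mu>(X, X')^2] \<ge> 0, the
  denominator sqrt (f2 * f2) is f2 itself.
\<close>

lemma expectation_finite_support:
  fixes f :: "'a \<Rightarrow> real"
  assumes "finite S" "set_pmf P \<subseteq> S"
  shows "measure_pmf.expectation P f = (\<Sum>p\<in>S. pmf P p * f p)"
  using assms by (subst integral_measure_pmf_real[where A=S]) (auto simp: mult.commute)

lemma expectation_pair_pmf:
  fixes f :: "'a \<times> 'b \<Rightarrow> real"
  assumes "finite (set_pmf P)" "finite (set_pmf Q)"
  shows "measure_pmf.expectation (pair_pmf P Q) f =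
    measure_pmf.expectation P (\<lambda>p. measure_pmf.expectation Q (\<lambda>q. f (p, q)))"
proof -
  have "measure_pmf.expectation (pair_pmf P Q) f =
      (\<Sum>pq\<in>set_pmf P \<times> set_pmf Q. pmf (pair_pmf P Q) pq * f pq)"
    using assms by (intro expectation_finite_support) auto
  also have "\<dots> = (\<Sum>p\<in>set_pmf P. pmf P p * (\<Sum>q\<in>set_pmf Q. pmf Q q * f (p, q)))"
    by (auto simp: sum.cartesian_product sum_distrib_left pmf_pair mult.assoc intro!: sum.cong)
  finally show ?thesis
    using assms by (simp add: expectation_finite_support)
qed

lemma sum_centered_times_additive:
  fixes \<pi> :: "'i \<Rightarrow> real"
  assumes row: "\<And>p. (\<Sum>q\<in>S. \<pi> q * c p q) = 0" and col: "\<And>q. (\<Sum>p\<in>S. \<pi> p * c p q) = 0"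
  shows "(\<Sum>p\<in>S. \<Sum>q\<in>S. \<pi> p * \<pi> q * c p q * (f p + g q + k)) = 0"
proof -
  have "(\<Sum>p\<in>S. \<Sum>q\<in>S. \<pi> p * \<pi> q * c p q * (f p + g q + k))
      = (\<Sum>p\<in>S. \<Sum>q\<in>S. \<pi> p * (f p + k) * (\<pi> q * c p q))
        + (\<Sum>p\<in>S. \<Sum>q\<in>S. \<pi> q * g q * (\<pi> p * c p q))"
    by (simp only: sum.distrib[symmetric]) (simp add: algebra_simps)
  also have "(\<Sum>p\<in>S. \<Sum>q\<in>S. \<pi> p * (f p + k) * (\<pi> q * c p q)) = 0"
    by (simp add: sum_distrib_left[symmetric] row)
  also have "(\<Sum>p\<in>S. \<Sum>q\<in>S. \<pi> q * g q * (\<pi> p * c p q)) = 0"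
    by (subst sum.swap) (simp add: sum_distrib_left[symmetric] col)
  finally show ?thesis
    by simp
qed

lemma sum_double_centered_product:
  fixes \<pi> :: "'i \<Rightarrow> real" and U :: "'i \<Rightarrow> 'a::real_normed_vector"
    and V :: "'i \<Rightarrow> 'b::real_normed_vector"
  assumes "sum \<pi> S = 1"
  defines "aU \<equiv> \<lambda>p. \<Sum>q\<in>S. \<pi> q * norm (U p - U q)"
  defines "DU \<equiv> \<Sum>p\<in>S. \<pi> p * aU p"
  defines "aV \<equiv> \<lambda>p. \<Sum>q\<in>S. \<pi> q * norm (V p - V q)"
  defines "DV \<equiv> \<Sum>p\<in>S. \<pi> p * aV p"
  shows "(\<Sum>p\<in>S. \<Sum>q\<in>S. \<pi> p * \<pi> q *
            ((norm (U p - U q) - aU p - aU q + DU) * (norm (V p - V q) - aV p - aV q + DV)))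
       = (\<Sum>p\<in>S. \<Sum>q\<in>S. \<pi> p * \<pi> q * norm (U p - U q) * norm (V p - V q))
         - 2 * (\<Sum>p\<in>S. \<pi> p * aU p * aV p) + DU * DV"
proof -
  define cU where "cU p q = norm (U p - U q) - aU p - aU q + DU" for p q
  have row: "(\<Sum>q\<in>S. \<pi> q * cU p q) = 0" for p
  proof -
    have "(\<Sum>q\<in>S. \<pi> q * cU p q) = (\<Sum>q\<in>S. \<pi> q * norm (U p - U q)) - aU p * sum \<pi> S
        - (\<Sum>q\<in>S. \<pi> q * aU q) + DU * sum \<pi> S"
      by (simp add: cU_def algebra_simps sum.distrib sum_subtractf sum_distrib_left sum_distrib_right)
    then show ?thesis
      by (simp add: assms(1) aU_def DU_def)
  qed
  have col: "(\<Sum>p\<in>S. \<pi> p * cU p q) = 0" for q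
  proof -
    have "cU p q = cU q p" for p
      by (simp add: cU_def norm_minus_commute)
    then show ?thesis
      using row[of q] by simp
  qed
  have "(\<Sum>p\<in>S. \<Sum>q\<in>S. \<pi> p * \<pi> q * (cU p q * (norm (V p - V q) - aV p - aV q + DV)))
      = (\<Sum>p\<in>S. \<Sum>q\<in>S. \<pi> p * \<pi> q * cU p q * norm (V p - V q))
        - (\<Sum>p\<in>S. \<Sum>q\<in>S. \<pi> p * \<pi> q * cU p q * (aV p + aV q + - DV))"
    by (simp only: sum_subtractf[symmetric]) (simp add: algebra_simps)
  also have "\<dots> = (\<Sum>p\<in>S. \<Sum>q\<in>S. \<pi> p * \<pi> q * cU p q * norm (V p - V q))"
    using sum_centered_times_additive[OF row col, of aV aV "- DV"] by simp
  also have "\<dots> = (\<Sum>p\<in>S. \<Sum>q\<in>S. \<pi> p * \<pi> q * norm (U p - U q) * norm (V p - V q))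
      - (\<Sum>p\<in>S. \<Sum>q\<in>S. \<pi> p * \<pi> q * aU p * norm (V p - V q))
      - (\<Sum>p\<in>S. \<Sum>q\<in>S. \<pi> p * \<pi> q * aU q * norm (V p - V q))
      + (\<Sum>p\<in>S. \<Sum>q\<in>S. \<pi> p * \<pi> q * DU * norm (V p - V q))"
    by (simp only: sum_subtractf[symmetric] sum.distrib[symmetric]) (simp add: cU_def algebra_simps)
  also have "(\<Sum>p\<in>S. \<Sum>q\<in>S. \<pi> p * \<pi> q * aU p * norm (V p - V q)) = (\<Sum>p\<in>S. \<pi> p * aU p * aV p)"
    by (simp add: aV_def sum_distrib_left mult_ac)
  also have "(\<Sum>p\<in>S. \<Sum>q\<in>S. \<pi> p * \<pi> q * aU q * norm (V p - V q)) = (\<Sum>p\<in>S. \<pi> p * aU p * aV p)"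
    by (subst sum.swap) (simp add: aV_def sum_distrib_left mult_ac norm_minus_commute)
  also have "(\<Sum>p\<in>S. \<Sum>q\<in>S. \<pi> p * \<pi> q * DU * norm (V p - V q)) = DU * DV"
    by (simp add: DV_def aV_def sum_distrib_left mult_ac)
  finally show ?thesis
    by (simp add: cU_def)
qed

lemma sum_mult_nested_sum:
  fixes a b :: "'i \<Rightarrow> 'a::comm_semiring_0"
  shows "(\<Sum>i\<in>I. a i * (\<Sum>j\<in>J. b j * c i j)) = (\<Sum>i\<in>I. \<Sum>j\<in>J. a i * b j * c i j)"
  by (simp add: sum_distrib_left mult.assoc)

definition mean_dist :: "'a::real_normed_vector pmf \<Rightarrow> 'a \<Rightarrow> real" where
  "mean_dist \<mu> u = measure_pmf.expectation \<mu> (\<lambda>u'. norm (u - u'))"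

definition mean_pair_dist :: "'a::real_normed_vector pmf \<Rightarrow> real" where
  "mean_pair_dist \<mu> = measure_pmf.expectation \<mu> (mean_dist \<mu>)"

lemma dcov2_eq_mean_dist:
  fixes M :: "('a::real_normed_vector \<times> 'b::real_normed_vector) pmf"
  defines "a \<equiv> mean_dist (map_pmf fst M)" and "D \<equiv> mean_pair_dist (map_pmf fst M)"
    and "b \<equiv> mean_dist (map_pmf snd M)" and "D' \<equiv> mean_pair_dist (map_pmf snd M)"
  shows "dcov2 M = measure_pmf.expectation (pair_pmf M M)
    (\<lambda>((x, y), (x', y')). (norm (x - x') - a x - a x' + D) * (norm (y - y') - b y - b y' + D'))"
  unfolding dcov2_def Let_def a_def b_def D_def D'_def mean_pair_dist_def mean_dist_def ..

lemma dcov2_expand: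
  fixes M :: "('a::real_normed_vector \<times> 'b::real_normed_vector) pmf"
  assumes fin: "finite (set_pmf M)"
  shows "dcov2 M =
      measure_pmf.expectation (pair_pmf M M) (\<lambda>((x, y), (x', y')). norm (x - x') * norm (y - y'))
      - 2 * measure_pmf.expectation M
              (\<lambda>(x, y). mean_dist (map_pmf fst M) x * mean_dist (map_pmf snd M) y)
      + mean_pair_dist (map_pmf fst M) * mean_pair_dist (map_pmf snd M)"
proof -
  have E: "measure_pmf.expectation M f = (\<Sum>z\<in>set_pmf M. pmf M z * f z)" for f :: "_ \<Rightarrow> real"
    using fin by (rule expectation_finite_support) simp
  have EE: "measure_pmf.expectation (pair_pmf M M) g =
      (\<Sum>p\<in>set_pmf M. \<Sum>q\<in>set_pmf M. pmf M p * pmf M q * g (p, q))" for g :: "_ \<Rightarrow> real"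
    by (simp add: expectation_pair_pmf[OF fin fin] E sum_distrib_left mult.assoc)
  have a: "mean_dist (map_pmf fst M) u = (\<Sum>q\<in>set_pmf M. pmf M q * norm (u - fst q))" for u
    by (simp add: mean_dist_def E)
  have b: "mean_dist (map_pmf snd M) v = (\<Sum>q\<in>set_pmf M. pmf M q * norm (v - snd q))" for v
    by (simp add: mean_dist_def E)
  have sum1: "sum (pmf M) (set_pmf M) = 1"
    using fin by (rule sum_pmf_eq_1) simp
  show ?thesis
    unfolding dcov2_eq_mean_dist mean_pair_dist_def EE
    using sum_double_centered_product[OF sum1, of fst snd]
    by (simp add: E a b case_prod_beta mult.assoc)
qed

lemma pair_pmf_map_diag:
  "pair_pmf (map_pmf (\<lambda>z. (z, z)) \<mu>) (map_pmf (\<lambda>z. (z, z)) \<mu>) =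
    map_pmf (\<lambda>(z, z'). ((z, z), (z', z'))) (pair_pmf \<mu> \<mu>)"
  by (simp add: map_pair[symmetric])

lemma dcov2_diag_nonneg: "0 \<le> dcov2 (map_pmf (\<lambda>z. (z, z)) \<mu>)"
  unfolding dcov2_eq_mean_dist pair_pmf_map_diag
  by (simp add: map_pmf_comp case_prod_beta)

lemma dcov2_diag_expand:
  fixes \<mu> :: "'a::real_normed_vector pmf"
  assumes "finite (set_pmf \<mu>)"
  shows "dcov2 (map_pmf (\<lambda>z. (z, z)) \<mu>) =
      measure_pmf.expectation (pair_pmf \<mu> \<mu>) (\<lambda>(z, z'). (norm (z - z'))\<^sup>2)
      - 2 * measure_pmf.expectation \<mu> (\<lambda>z. (mean_dist \<mu> z)\<^sup>2) + (mean_pair_dist \<mu>)\<^sup>2"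
  using assms
  by (simp add: dcov2_expand pair_pmf_map_diag map_pmf_comp case_prod_beta' power2_eq_square)

lemma dcor2_eq_if_marginals_eq:
  assumes "map_pmf snd M = map_pmf fst M"
  shows "dcor2 M = dcov2 M / dcov2 (map_pmf (\<lambda>z. (z, z)) (map_pmf fst M))"
proof -
  have "map_pmf (\<lambda>(x, y). (x, x)) M = map_pmf (\<lambda>z. (z, z)) (map_pmf fst M)"
       "map_pmf (\<lambda>(x, y). (y, y)) M = map_pmf (\<lambda>z. (z, z)) (map_pmf snd M)"
    by (simp_all add: map_pmf_comp case_prod_beta')
  then show ?thesis
    unfolding dcor2_def assms by (simp add: dcov2_diag_nonneg)
qed

lemma total_weight_symmetric:
  fixes w :: "nat \<Rightarrow> nat \<Rightarrow> real"
  assumes "\<And>i j. i < n \<Longrightarrow> j < n \<Longrightarrow> w i j = w j i"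
  shows "(\<Sum>i<n. \<Sum>j<n. if i = j then 2 * w i j else w i j) = 2 * total_weight n w"
  using assms
proof (induction n)
  case 0
  then show ?case
    by (simp add: total_weight_def)
next
  case (Suc n)
  have "(\<Sum>i<n. if i = n then 2 * w i n else w i n) = (\<Sum>i<n. w i n)"
    by (intro sum.cong) auto
  moreover have "(\<Sum>j<n. if n = j then 2 * w n j else w n j) = (\<Sum>j<n. w j n)"
    using Suc.prems by (intro sum.cong) auto
  moreover have "total_weight (Suc n) w = total_weight n w + (\<Sum>i<n. w i n) + w n n"
    by (simp add: total_weight_def lessThan_Suc_atMost[symmetric])
  ultimately show ?case
    using Suc by (simp add: sum.distrib algebra_simps)
qed

locale weighted_graph =
  fixes n :: nat and w :: "nat \<Rightarrow> nat \<Rightarrow> real"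
  assumes nonneg: "\<And>i j. i < n \<Longrightarrow> j < n \<Longrightarrow> w i j \<ge> 0"
    and sym: "\<And>i j. i < n \<Longrightarrow> j < n \<Longrightarrow> w i j = w j i"
    and pos: "total_weight n w > 0"
begin

abbreviation row_weight :: "nat \<Rightarrow> real" where
  "row_weight i \<equiv> \<Sum>j<n. normA n w i j"

abbreviation col_weight :: "nat \<Rightarrow> real" where
  "col_weight j \<equiv> \<Sum>i<n. normA n w i j"

lemma sum_normA: "(\<Sum>i<n. \<Sum>j<n. normA n w i j) = 1"
proof -
  have "(\<Sum>i<n. \<Sum>j<n. normA n w i j) =
      (\<Sum>i<n. \<Sum>j<n. (if i = j then 2 * w i j else w i j) / (2 * total_weight n w))"
    unfolding normA_def using pos by (intro sum.cong refl) auto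
  also have "\<dots> = (\<Sum>i<n. \<Sum>j<n. if i = j then 2 * w i j else w i j) / (2 * total_weight n w)"
    by (simp add: sum_divide_distrib)
  finally show ?thesis
    using pos by (simp add: total_weight_symmetric[OF sym])
qed

lemma pmf_vertex_pair_pmf:
  "pmf (vertex_pair_pmf n w) (i, j) = (if i < n \<and> j < n then normA n w i j else 0)"
proof -
  define f where "f = (\<lambda>(i, j). if i < n \<and> j < n then normA n w i j else 0)"
  have f_nonneg: "0 \<le> f p" for p
    using nonneg pos by (auto simp: f_def normA_def split: prod.splits)
  have "(\<integral>\<^sup>+p. ennreal (f p) \<partial>count_space UNIV) = (\<Sum>p\<in>{..<n} \<times> {..<n}. ennreal (f p))"
    by (rule nn_integral_count_space') (auto simp: f_def split: if_splits)
  also have "\<dots> = ennreal (\<Sum>p\<in>{..<n} \<times> {..<n}. f p)"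
    using f_nonneg by (simp add: sum_ennreal)
  also have "(\<Sum>p\<in>{..<n} \<times> {..<n}. f p) = (\<Sum>i<n. \<Sum>j<n. normA n w i j)"
    unfolding sum.cartesian_product by (auto simp: f_def intro!: sum.cong)
  finally have total: "(\<integral>\<^sup>+p. ennreal (f p) \<partial>count_space UNIV) = 1"
    by (simp add: sum_normA)
  show ?thesis
    unfolding vertex_pair_pmf_def f_def[symmetric]
    using pmf_embed_pmf[OF f_nonneg total] by (simp add: f_def)
qed

lemma set_vertex_pair_pmf: "set_pmf (vertex_pair_pmf n w) \<subseteq> {..<n} \<times> {..<n}"
  by (auto simp: set_pmf_eq pmf_vertex_pair_pmf split: if_splits)

lemma expectation_vertex_pair_pmf:
  "measure_pmf.expectation (vertex_pair_pmf n w) h = (\<Sum>i<n. \<Sum>j<n. normA n w i j * h (i, j))"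
  by (auto simp: expectation_finite_support[OF _ set_vertex_pair_pmf] sum.cartesian_product
      pmf_vertex_pair_pmf intro!: sum.cong)

lemma map_swap_vertex_pair_pmf: "map_pmf prod.swap (vertex_pair_pmf n w) = vertex_pair_pmf n w"
proof (rule pmf_eqI)
  fix p :: "nat \<times> nat"
  have "pmf (map_pmf prod.swap (vertex_pair_pmf n w)) p = pmf (vertex_pair_pmf n w) (prod.swap p)"
    using pmf_map_inj'[of prod.swap _ "prod.swap p"] by simp
  also have "\<dots> = pmf (vertex_pair_pmf n w) p"
    using sym by (cases p) (simp add: pmf_vertex_pair_pmf normA_def)
  finally show "pmf (map_pmf prod.swap (vertex_pair_pmf n w)) p = pmf (vertex_pair_pmf n w) p" .
qed


lemma finite_set_attr_pmf: "finite (set_pmf (attr_pmf n w x))"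
  unfolding attr_pmf_def set_map_pmf
  by (rule finite_imageI, rule finite_subset[OF set_vertex_pair_pmf]) simp

lemma attr_pmf_marginals_eq: "map_pmf snd (attr_pmf n w x) = map_pmf fst (attr_pmf n w x)"
proof -
  have "map_pmf (\<lambda>p. x (snd p)) (vertex_pair_pmf n w) =
      map_pmf (\<lambda>p. x (fst p)) (map_pmf prod.swap (vertex_pair_pmf n w))"
    by (simp add: map_pmf_comp)
  then show ?thesis
    by (simp add: attr_pmf_def map_pmf_comp case_prod_beta' map_swap_vertex_pair_pmf)
qed

lemma expectation_attr_pmf:
  "measure_pmf.expectation (attr_pmf n w x) h = (\<Sum>i<n. \<Sum>j<n. normA n w i j * h (x i, x j))"
  by (simp add: attr_pmf_def expectation_vertex_pair_pmf case_prod_beta')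

lemma expectation_attr_fst:
  "measure_pmf.expectation (map_pmf fst (attr_pmf n w x)) g = (\<Sum>i<n. row_weight i * g (x i))"
  by (simp add: expectation_attr_pmf sum_distrib_right)

lemma mean_dist_attr_fst:
  "mean_dist (map_pmf fst (attr_pmf n w x)) u = (\<Sum>i<n. row_weight i * norm (u - x i))"
  unfolding mean_dist_def expectation_attr_fst ..

lemma mean_dist_attr_snd:
  "mean_dist (map_pmf snd (attr_pmf n w x)) u = (\<Sum>j<n. col_weight j * norm (u - x j))"
proof -
  have "mean_dist (map_pmf snd (attr_pmf n w x)) u = (\<Sum>i<n. \<Sum>j<n. normA n w i j * norm (u - x j))"
    by (simp add: mean_dist_def expectation_attr_pmf)
  also have "\<dots> = (\<Sum>j<n. \<Sum>i<n. normA n w i j * norm (u - x j))"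
    by (rule sum.swap)
  finally show ?thesis
    by (simp add: sum_distrib_right)
qed

lemma mean_pair_dist_attr_fst:
  "mean_pair_dist (map_pmf fst (attr_pmf n w x)) =
    (\<Sum>i<n. \<Sum>i'<n. row_weight i * row_weight i' * norm (x i - x i'))"
  unfolding mean_pair_dist_def expectation_attr_fst mean_dist_attr_fst by (rule sum_mult_nested_sum)

lemma expectation_pair_attr_pmf:
  "measure_pmf.expectation (pair_pmf (attr_pmf n w x) (attr_pmf n w x)) h =
    (\<Sum>i'<n. \<Sum>j'<n. \<Sum>i<n. \<Sum>j<n.
       normA n w i j * normA n w i' j' * h ((x i, x j), (x i', x j')))"
proof -
  let ?M = "attr_pmf n w x"
  have "measure_pmf.expectation (pair_pmf ?M ?M) h =
      measure_pmf.expectation (pair_pmf ?M ?M) (\<lambda>(q, p). h (p, q))"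
    by (subst pair_commute_pmf) (simp add: case_prod_beta')
  also have "\<dots> = measure_pmf.expectation ?M (\<lambda>q. measure_pmf.expectation ?M (\<lambda>p. h (p, q)))"
    by (simp add: expectation_pair_pmf finite_set_attr_pmf)
  finally show ?thesis
    by (simp add: expectation_attr_pmf sum_distrib_left mult_ac)
qed

lemma dcov2_attr_pmf:
  "dcov2 (attr_pmf n w x) =
    (\<Sum>i'<n. \<Sum>j'<n. \<Sum>i<n. \<Sum>j<n.
       normA n w i j * normA n w i' j' * norm (x i - x i') * norm (x j - x j'))
    - 2 * (\<Sum>i<n. \<Sum>j<n. normA n w i j * (\<Sum>i'<n. row_weight i' * norm (x i - x i'))
                                           * (\<Sum>j'<n. col_weight j' * norm (x j - x j')))
    + (\<Sum>i<n. \<Sum>i'<n. row_weight i * row_weight i' * norm (x i - x i'))\<^sup>2"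
proof -
  have "mean_pair_dist (map_pmf snd (attr_pmf n w x)) = mean_pair_dist (map_pmf fst (attr_pmf n w x))"
    by (simp only: attr_pmf_marginals_eq)
  then show ?thesis
    using dcov2_expand[OF finite_set_attr_pmf, of x]
    by (simp add: expectation_pair_attr_pmf expectation_attr_pmf mean_dist_attr_fst
        mean_dist_attr_snd mean_pair_dist_attr_fst mult.assoc power2_eq_square)
qed

lemma dcov2_attr_marginal_diag:
  "dcov2 (map_pmf (\<lambda>z. (z, z)) (map_pmf fst (attr_pmf n w x))) =
    (\<Sum>i<n. \<Sum>i'<n. row_weight i * row_weight i' * (norm (x i - x i'))\<^sup>2)
    - 2 * (\<Sum>i<n. row_weight i * (\<Sum>i'<n. row_weight i' * norm (x i - x i'))\<^sup>2)
    + (\<Sum>i<n. \<Sum>i'<n. row_weight i * row_weight i' * norm (x i - x i'))\<^sup>2"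
proof -
  let ?\<mu> = "map_pmf fst (attr_pmf n w x)"
  have fin: "finite (set_pmf ?\<mu>)"
    using finite_set_attr_pmf[of x] by simp
  have pair: "measure_pmf.expectation (pair_pmf ?\<mu> ?\<mu>) (\<lambda>(z, z'). (norm (z - z'))\<^sup>2) =
      (\<Sum>i<n. \<Sum>i'<n. row_weight i * row_weight i' * (norm (x i - x i'))\<^sup>2)"
    unfolding expectation_pair_pmf[OF fin fin] expectation_attr_fst
    by (simp add: sum_mult_nested_sum)
  show ?thesis
    unfolding dcov2_diag_expand[OF fin] pair expectation_attr_fst mean_dist_attr_fst
      mean_pair_dist_attr_fst ..
qed

end

theorem mainTheorem1:
  fixes n :: nat and w :: "nat \<Rightarrow> nat \<Rightarrow> real" and x :: "nat \<Rightarrow> real ^ 'd"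
  assumes nonneg: "\<And>i j. i < n \<Longrightarrow> j < n \<Longrightarrow> w i j \<ge> 0"
      and sym: "\<And>i j. i < n \<Longrightarrow> j < n \<Longrightarrow> w i j = w j i"
      and pos: "total_weight n w > 0"
  shows "dcor2 (attr_pmf n w x) =
    (let A = normA n w;
         Ar = (\<lambda>i. \<Sum>j<n. A i j);
         Ac = (\<lambda>j. \<Sum>i<n. A i j);
         d = (\<lambda>i i'. norm (x i - x i'));
         f1 = (\<Sum>i'<n. \<Sum>j'<n. \<Sum>i<n. \<Sum>j<n. A i j * A i' j' * d i i' * d j j')
              - 2 * (\<Sum>i<n. \<Sum>j<n. A i j * (\<Sum>i'<n. Ar i' * d i i') * (\<Sum>j'<n. Ac j' * d j j'))
              + (\<Sum>i<n. \<Sum>i'<n. Ar i * Ar i' * d i i')\<^sup>2;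
         f2 = (\<Sum>i<n. \<Sum>i'<n. Ar i * Ar i' * (d i i')\<^sup>2)
              - 2 * (\<Sum>i<n. Ar i * (\<Sum>i'<n. Ar i' * d i i')\<^sup>2)
              + (\<Sum>i<n. \<Sum>i'<n. Ar i * Ar i' * d i i')\<^sup>2
     in f1 / f2)"
proof -
  interpret weighted_graph n w
    using assms by unfold_locales
  have "dcor2 (attr_pmf n w x) =
      dcov2 (attr_pmf n w x) / dcov2 (map_pmf (\<lambda>z. (z, z)) (map_pmf fst (attr_pmf n w x)))"
    using attr_pmf_marginals_eq by (rule dcor2_eq_if_marginals_eq)
  then show ?thesis
    unfolding Let_def dcov2_attr_pmf dcov2_attr_marginal_diag .
qed

end
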